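(* Let $T$ be a countable tree without leaves (vertices of infinite degree are allowed), let $P=(p(x,y))_{x,y\in T}$ be a stochastic nearest-neighbour transition matrix on $T$, and let $\lambda\in\mathbb C$. Suppose the oriented edges of $T$ carry $\lambda$-weights $f(x,y)\in\mathbb C$ ($x\sim y$) satisfying, for every vertex $x$ and every neighbour $y$ of $x$: (i) $f(x,y)f(y,x)\neq 1$; (ii) the series $u(x,x)=\sum_{v\sim x}p(x,v)f(v,x)$ converges absolutely and $u(x,x)\neq\lambda$; (iii) $\lambda f(x,y)=p(x,y)+\bigl(u(x,x)-p(x,y)f(y,x)\bigr)f(x,y)$. Extend $f$ to all pairs by $f(x,x)=1$ and $f(x,y)=f(x_0,x_1)f(x_1,x_2)\cdots f(x_{k-1},x_k)$ when the geodesic from $x$ to $y$ is $[x=x_0,x_1,\dots,x_k=y]$. Then for every fixed $y\in T$, the function $x\mapsto f(x,y)$ satisfies $$\sum_{w\sim x}p(x,w)f(w,y)=\lambda f(x,y)\quad\text{for } x\neq y,\qquad \sum_{w\sim y}p(y,w)f(w,y)=u(y,y),$$ where the sums converge absolutely.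
   Context: A nearest-neighbour stochastic transition matrix means $p(x,y)>0$ if and only if $x$ and $y$ are neighbours ($x\sim y$), and $\sum_y p(x,y)=1$ for all $x$. The tree may have vertices of infinite degree; a leaf is a vertex of degree $1$. *)

theory Defs
  imports "HOL-Analysis.Analysis"
begin

definition graph :: "'a set \<Rightarrow> ('a \<Rightarrow> 'a \<Rightarrow> bool) \<Rightarrow> bool" where
  "graph V adj \<longleftrightarrow> (\<forall>x y. adj x y \<longrightarrow> x \<in> V \<and> y \<in> V \<and> adj y x \<and> x \<noteq> y)"

definition walk :: "('a \<Rightarrow> 'a \<Rightarrow> bool) \<Rightarrow> 'a list \<Rightarrow> bool" where
  "walk adj xs \<longleftrightarrow> xs \<noteq> [] \<and> (\<forall>i. Suc i < length xs \<longrightarrow> adj (xs ! i) (xs ! Suc i))"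

definition connected_graph :: "'a set \<Rightarrow> ('a \<Rightarrow> 'a \<Rightarrow> bool) \<Rightarrow> bool" where
  "connected_graph V adj \<longleftrightarrow>
     (\<forall>x\<in>V. \<forall>y\<in>V. \<exists>xs. walk adj xs \<and> hd xs = x \<and> last xs = y)"

definition is_cycle :: "('a \<Rightarrow> 'a \<Rightarrow> bool) \<Rightarrow> 'a list \<Rightarrow> bool" where
  "is_cycle adj xs \<longleftrightarrow> length xs \<ge> 3 \<and> distinct xs \<and> walk adj xs \<and> adj (last xs) (hd xs)"

definition tree :: "'a set \<Rightarrow> ('a \<Rightarrow> 'a \<Rightarrow> bool) \<Rightarrow> bool" where
  "tree V adj \<longleftrightarrow> graph V adj \<and> connected_graph V adj \<and> (\<nexists>xs. is_cycle adj xs)"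

definition leaf :: "('a \<Rightarrow> 'a \<Rightarrow> bool) \<Rightarrow> 'a \<Rightarrow> bool" where
  "leaf adj x \<longleftrightarrow> (\<exists>!y. adj x y)"

definition nn_stochastic :: "'a set \<Rightarrow> ('a \<Rightarrow> 'a \<Rightarrow> bool) \<Rightarrow> ('a \<Rightarrow> 'a \<Rightarrow> real) \<Rightarrow> bool" where
  "nn_stochastic V adj p \<longleftrightarrow>
     (\<forall>x\<in>V. \<forall>y\<in>V. p x y > 0 \<longleftrightarrow> adj x y) \<and>
     (\<forall>x\<in>V. \<forall>y\<in>V. p x y \<ge> 0) \<and>
     (\<forall>x\<in>V. (p x has_sum 1) V)"

text \<open>Geodesic: the (in a tree unique) path without repeated vertices from x to y.\<close>
definition geodesic :: "('a \<Rightarrow> 'a \<Rightarrow> bool) \<Rightarrow> 'a \<Rightarrow> 'a \<Rightarrow> 'a list" where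
  "geodesic adj x y = (THE xs. walk adj xs \<and> distinct xs \<and> hd xs = x \<and> last xs = y)"

text \<open>Multiplicative extension of edge weights along geodesics; f(x,x) = 1 (empty product).\<close>
definition ext_weight :: "('a \<Rightarrow> 'a \<Rightarrow> bool) \<Rightarrow> ('a \<Rightarrow> 'a \<Rightarrow> complex) \<Rightarrow> 'a \<Rightarrow> 'a \<Rightarrow> complex" where
  "ext_weight adj f x y =
     (let xs = geodesic adj x y in prod_list (map (\<lambda>(a, b). f a b) (zip xs (tl xs))))"

end

theory Submission
  imports Defs
begin

(* For x \<noteq> y let x1 be the neighbour of x on the geodesic to y. Every other neighbour w of x
   reaches y through x, so f(w,y) = f(w,x) f(x,y), while f(x,y) = f(x,x1) f(x1,y). Hence
   \<Sum>w p(x,w) f(w,y) = p(x,x1) f(x1,y) + (u(x,x) - p(x,x1) f(x1,x)) f(x,y), which by the edge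
   equation (iii) for (x,x1) is \<lambda> f(x,x1) f(x1,y) = \<lambda> f(x,y). At x = y every f(w,y) is an
   edge weight, so the sum is u(y,y) itself. Only the tree structure, the absolute convergence
   of u and (iii) are needed. *)

lemma walk_Nil [simp]: "\<not> walk adj []"
  by (simp add: walk_def)

lemma walk_single [simp]: "walk adj [x]"
  by (simp add: walk_def)

lemma walk_Cons_Cons [simp]: "walk adj (x # y # xs) \<longleftrightarrow> adj x y \<and> walk adj (y # xs)"
  unfolding walk_def
proof safe
  fix i assume "\<forall>i. Suc i < length (x # y # xs) \<longrightarrow> adj ((x # y # xs) ! i) ((x # y # xs) ! Suc i)"
    and "Suc i < length (y # xs)"
  then show "adj ((y # xs) ! i) ((y # xs) ! Suc i)"
    by (metis Suc_less_eq length_Cons nth_Cons_Suc)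
next
  fix i assume "adj x y" "\<forall>i. Suc i < length (y # xs) \<longrightarrow> adj ((y # xs) ! i) ((y # xs) ! Suc i)"
    "Suc i < length (x # y # xs)"
  then show "adj ((x # y # xs) ! i) ((x # y # xs) ! Suc i)"
    by (cases i) auto
qed auto

lemma walk_Cons: "walk adj (x # xs) \<longleftrightarrow> xs = [] \<or> adj x (hd xs) \<and> walk adj xs"
  by (cases xs) auto

lemma walk_append:
  assumes "xs \<noteq> []" "ys \<noteq> []"
  shows "walk adj (xs @ ys) \<longleftrightarrow> walk adj xs \<and> walk adj ys \<and> adj (last xs) (hd ys)"
  using assms by (induction xs rule: induct_list012) (auto simp: walk_Cons)

lemma walk_rev:
  assumes "\<And>a b. adj a b \<Longrightarrow> adj b a" "walk adj xs"
  shows "walk adj (rev xs)"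
    using assms(2)
proof (induction xs)
  case (Cons x xs)
  show ?case
  proof (cases xs)
    case (Cons y ys)
    then have "walk adj (rev xs)" "adj (last (rev xs)) x"
      using Cons.IH Cons.prems assms(1) by (auto simp: last_rev)
    then show ?thesis
      using walk_append[of "rev xs" "[x]" adj] Cons by simp
  qed simp
qed simp

lemma walk_suffix: "walk adj (xs @ ys) \<Longrightarrow> ys \<noteq> [] \<Longrightarrow> walk adj ys"
  by (cases "xs = []") (auto simp: walk_append)

lemma walk_prefix: "walk adj (xs @ ys) \<Longrightarrow> xs \<noteq> [] \<Longrightarrow> walk adj xs"
  by (cases "ys = []") (auto simp: walk_append)

lemma walk_imp_path:
  "walk adj xs \<Longrightarrow> \<exists>ys. walk adj ys \<and> distinct ys \<and> hd ys = hd xs \<and> last ys = last xs"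
proof (induction xs)
  case (Cons x xs)
  show ?case
  proof (cases xs)
    case Nil
    then show ?thesis by (intro exI[of _ "[x]"]) simp
  next
    case (Cons x' xs')
    then obtain ys where ys: "walk adj ys" "distinct ys" "hd ys = x'" "last ys = last xs"
      using Cons.IH Cons.prems by auto
    show ?thesis
    proof (cases "x \<in> set ys")
      case True
      then obtain u v where "ys = u @ x # v" by (meson split_list)
      then show ?thesis
        using ys walk_suffix[of adj u "x # v"] Cons by (intro exI[of _ "x # v"]) auto
    next
      case False
      then show ?thesis
        using ys Cons Cons.prems by (intro exI[of _ "x # ys"]) (auto simp: walk_Cons)
    qed
  qed
qed simp

lemma distinct_hd_eq_last: "distinct xs \<Longrightarrow> xs \<noteq> [] \<Longrightarrow> hd xs = last xs \<Longrightarrow> xs = [hd xs]"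
  by (cases xs) (auto split: if_splits)

lemma internally_disjoint_paths_imp_cycle:
  assumes sym: "\<And>a b. adj a b \<Longrightarrow> adj b a"
    and P: "walk adj P" "distinct P" and Q: "walk adj Q" "distinct Q"
    and ends: "hd P = hd Q" "last P = last Q" and "P \<noteq> Q"
    and disjoint: "\<forall>z \<in> set P \<inter> set Q. z = hd P \<or> z = last P"
  shows "\<exists>C. is_cycle adj C"
proof -
  have "P \<noteq> []" "Q \<noteq> []" using P Q by auto
  have "hd P \<noteq> last P"
    using distinct_hd_eq_last \<open>P \<noteq> Q\<close> \<open>P \<noteq> []\<close> \<open>Q \<noteq> []\<close> P Q ends by metis
  then obtain x P' where P_eq: "P = x # P'" "P' \<noteq> []"
    using \<open>P \<noteq> []\<close> by (cases P) (auto split: if_splits)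
  obtain Q' where "Q = x # Q'" "Q' \<noteq> []"
    using \<open>Q \<noteq> []\<close> \<open>hd P \<noteq> last P\<close> ends P_eq by (cases Q) (auto split: if_splits)
  then obtain M y where Q_eq: "Q = x # M @ [y]"
    by (metis rev_exhaust)
  have "last P = y" using ends Q_eq by simp
  have wQ: "walk adj (x # M @ [y])" using Q Q_eq by simp
  show ?thesis
  proof (cases "M = []")
    case True
    with \<open>P \<noteq> Q\<close> P_eq Q_eq \<open>last P = y\<close> have "length P \<ge> 3"
      by (cases P' rule: rev_cases) (auto simp: Suc_le_eq split: if_splits)
    moreover have "adj y x" using wQ True sym by simp
    ultimately have "is_cycle adj P"
      using P P_eq \<open>last P = y\<close> by (simp add: is_cycle_def)
    then show ?thesis ..
  next
    case False
    have wM: "walk adj M" using wQ False walk_prefix[of adj M "[y]"] walk_suffix[of adj "[x]" "M @ [y]"]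
      by auto
    have "adj (last M) y" using wQ False walk_append[of "x # M" "[y]" adj] by auto
    then have "walk adj (P @ rev M)"
      using walk_append[of P "rev M" adj] P P_eq False walk_rev[OF sym wM] sym \<open>last P = y\<close>
      by (simp add: hd_rev)
    moreover have "set M \<inter> set P = {}"
      using disjoint Q(2) Q_eq P_eq \<open>last P = y\<close> by auto
    then have "distinct (P @ rev M)" using P Q Q_eq by auto
    moreover have "length (P @ rev M) \<ge> 3" using P_eq False by (cases P') (auto simp: Suc_le_eq)
    moreover have "adj (last (P @ rev M)) (hd (P @ rev M))"
      using wQ False sym P_eq by (cases M) (auto simp: last_rev)
    ultimately have "is_cycle adj (P @ rev M)" by (simp add: is_cycle_def)
    then show ?thesis ..
  qed
qed

lemma acyclic_path_unique:
  assumes sym: "\<And>a b. adj a b \<Longrightarrow> adj b a" and acyclic: "\<nexists>C. is_cycle adj C"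
    and "walk adj P" "distinct P" "walk adj Q" "distinct Q" "hd P = hd Q" "last P = last Q"
  shows "P = Q"
  using assms(3-)
proof (induction "length P + length Q" arbitrary: P Q rule: less_induct)
  case less
  show ?case
  proof (cases "\<exists>z \<in> set P \<inter> set Q. z \<noteq> hd P \<and> z \<noteq> last P")
    case True
    then obtain z P1 P2 Q1 Q2 where z: "z \<noteq> hd P" "z \<noteq> last P"
      and P_eq: "P = P1 @ z # P2" and Q_eq: "Q = Q1 @ z # Q2"
      by (metis IntE split_list)
    have ne: "P1 \<noteq> []" "P2 \<noteq> []" "Q1 \<noteq> []" "Q2 \<noteq> []"
      using z P_eq Q_eq less.prems(5,6) by auto
    have "P1 @ [z] = Q1 @ [z]"
      using less.hyps[of "P1 @ [z]" "Q1 @ [z]"] less.prems P_eq Q_eq ne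
        walk_prefix[of adj "P1 @ [z]" P2] walk_prefix[of adj "Q1 @ [z]" Q2] by auto
    moreover have "z # P2 = z # Q2"
      using less.hyps[of "z # P2" "z # Q2"] less.prems P_eq Q_eq ne
        walk_suffix[of adj P1 "z # P2"] walk_suffix[of adj Q1 "z # Q2"] by auto
    ultimately show ?thesis using P_eq Q_eq by simp
  next
    case False
    show ?thesis
    proof (rule ccontr)
      assume "P \<noteq> Q"
      then have "\<exists>C. is_cycle adj C"
        using internally_disjoint_paths_imp_cycle[of adj P Q] sym less.prems False by blast
      with acyclic show False ..
    qed
  qed
qed

lemma tree_adj_sym: "tree V adj \<Longrightarrow> adj x y \<Longrightarrow> adj y x"
  by (simp add: tree_def graph_def)

lemma tree_adj_irrefl: "tree V adj \<Longrightarrow> adj x y \<Longrightarrow> x \<noteq> y"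
  by (simp add: tree_def graph_def)

lemma tree_path_exists:
  assumes "tree V adj" "x \<in> V" "y \<in> V"
  obtains P where "walk adj P" "distinct P" "hd P = x" "last P = y"
  using assms walk_imp_path unfolding tree_def connected_graph_def by metis

lemma tree_path_unique:
  assumes "tree V adj" "walk adj P" "distinct P" "walk adj Q" "distinct Q"
    "hd P = hd Q" "last P = last Q"
  shows "P = Q"
  using acyclic_path_unique[of adj P Q] tree_adj_sym[OF assms(1)] assms by (auto simp: tree_def)

lemma ext_weight_path:
  assumes "tree V adj" "walk adj P" "distinct P" "hd P = x" "last P = y"
  shows "ext_weight adj f x y = prod_list (map (\<lambda>(a, b). f a b) (zip P (tl P)))"
proof -
  have "geodesic adj x y = P"
    unfolding geodesic_def using assms tree_path_unique[OF assms(1)] by (intro the_equality) auto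
  then show ?thesis by (simp add: ext_weight_def)
qed

lemma ext_weight_Cons:
  assumes "tree V adj" "walk adj (x # P)" "distinct (x # P)" "P \<noteq> []" "last P = y"
  shows "ext_weight adj f x y = f x (hd P) * ext_weight adj f (hd P) y"
  using assms ext_weight_path[OF assms(1-3)] ext_weight_path[OF assms(1), of P "hd P" y]
  by (cases P) (auto simp: walk_Cons)

lemma ext_weight_edge:
  assumes "tree V adj" "adj x y"
  shows "ext_weight adj f x y = f x y"
  using ext_weight_path[OF assms(1), of "[x, y]"] assms tree_adj_irrefl by fastforce

lemma ext_weight_via_neighbour:
  assumes tree: "tree V adj" and path: "walk adj (x # x1 # P)" "distinct (x # x1 # P)"
    and y: "last (x1 # P) = y" and "adj x w" "w \<noteq> x1"
  shows "ext_weight adj f w y = f w x * ext_weight adj f x y"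
proof -
  have "w \<notin> set (x1 # P)"
  proof
    assume "w \<in> set (x1 # P)"
    then obtain Q R where QR: "x1 # P = Q @ w # R" by (meson split_list)
    then have "walk adj (x # Q @ [w])" "distinct (x # Q @ [w])"
      using path walk_prefix[of adj "x # Q @ [w]" R] by auto
    then have "x # Q @ [w] = [x, w]"
      using tree_path_unique[OF tree, of "x # Q @ [w]" "[x, w]"] \<open>adj x w\<close> tree_adj_irrefl[OF tree]
      by auto
    with QR \<open>w \<noteq> x1\<close> show False by simp
  qed
  moreover have "w \<noteq> x" using tree_adj_irrefl[OF tree \<open>adj x w\<close>] by blast
  ultimately have "walk adj (w # x # x1 # P)" "distinct (w # x # x1 # P)"
    using path tree_adj_sym[OF tree \<open>adj x w\<close>] by auto
  then show ?thesis using ext_weight_Cons[OF tree, of w "x # x1 # P" y] y by simp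
qed

lemma infsum_scaled_except_point:
  fixes g h :: "'a \<Rightarrow> 'b :: {banach, real_normed_div_algebra}"
  assumes h: "(\<lambda>w. norm (h w)) summable_on S" and "a \<in> S"
    and g: "\<And>w. w \<in> S \<Longrightarrow> w \<noteq> a \<Longrightarrow> g w = h w * c"
  shows "(\<lambda>w. norm (g w)) summable_on S \<and> infsum g S = g a + (infsum h S - h a) * c"
proof -
  have S: "S = insert a (S - {a})" using \<open>a \<in> S\<close> by auto
  have h': "(\<lambda>w. norm (h w)) summable_on (S - {a})"
    using h S summable_on_insert_iff by metis
  have "(\<lambda>w. norm (h w) * norm c) summable_on (S - {a})"
    using h' by (rule summable_on_cmult_left)
  then have g': "(\<lambda>w. norm (g w)) summable_on (S - {a})"
    by (rule summable_on_cong[THEN iffD1, rotated]) (simp add: g norm_mult)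
  have "infsum g S = g a + infsum g (S - {a})"
    using infsum_insert[OF abs_summable_summable[OF g'], of a] S by simp
  also have "infsum g (S - {a}) = infsum (\<lambda>w. h w * c) (S - {a})"
    by (rule infsum_cong) (simp add: g)
  also have "\<dots> = infsum h (S - {a}) * c"
    by (rule infsum_cmult_left')
  also have "infsum h (S - {a}) = infsum h S - h a"
    using infsum_insert[OF abs_summable_summable[OF h'], of a] S by simp
  finally show ?thesis
    using g' S summable_on_insert_iff by metis
qed

lemma ext_weight_eigenfunction_off_target:
  fixes adj :: "'a \<Rightarrow> 'a \<Rightarrow> bool" and p :: "'a \<Rightarrow> 'a \<Rightarrow> real"
    and f :: "'a \<Rightarrow> 'a \<Rightarrow> complex" and x :: 'a
  defines "u \<equiv> infsum (\<lambda>v. of_real (p x v) * f v x) {v. adj x v}"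
  assumes tree: "tree V adj" and "x \<in> V" "y \<in> V" "x \<noteq> y"
    and summable: "(\<lambda>v. norm (of_real (p x v) * f v x)) summable_on {v. adj x v}"
    and edge_eq: "\<And>z. adj x z \<Longrightarrow> lam * f x z = of_real (p x z) + (u - of_real (p x z) * f z x) * f x z"
  shows "(\<lambda>w. norm (of_real (p x w) * ext_weight adj f w y)) summable_on {w. adj x w}
    \<and> infsum (\<lambda>w. of_real (p x w) * ext_weight adj f w y) {w. adj x w} = lam * ext_weight adj f x y"
proof -
  obtain G where G: "walk adj G" "distinct G" "hd G = x" "last G = y"
    using tree_path_exists[OF tree \<open>x \<in> V\<close> \<open>y \<in> V\<close>] .
  then obtain x1 P where G_eq: "G = x # x1 # P"
    using \<open>x \<noteq> y\<close> by (cases G; cases "tl G") auto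
  let ?E = "\<lambda>w. ext_weight adj f w y"
  have "adj x x1" using G G_eq by simp
  have E_x: "?E x = f x x1 * ?E x1"
    using ext_weight_Cons[OF tree, of x "x1 # P" y] G G_eq by simp
  have "of_real (p x w) * ?E w = of_real (p x w) * f w x * ?E x"
    if "w \<in> {w. adj x w}" "w \<noteq> x1" for w
    using ext_weight_via_neighbour[OF tree, of x x1 P y w] G G_eq that by simp
  then have "(\<lambda>w. norm (of_real (p x w) * ?E w)) summable_on {w. adj x w}
    \<and> infsum (\<lambda>w. of_real (p x w) * ?E w) {w. adj x w}
      = of_real (p x x1) * ?E x1 + (u - of_real (p x x1) * f x1 x) * ?E x"
    using infsum_scaled_except_point[OF summable, of x1 "\<lambda>w. of_real (p x w) * ?E w" "?E x"]
      \<open>adj x x1\<close> unfolding u_def by simp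
  moreover have "of_real (p x x1) * ?E x1 + (u - of_real (p x x1) * f x1 x) * ?E x
      = (of_real (p x x1) + (u - of_real (p x x1) * f x1 x) * f x x1) * ?E x1"
    by (simp add: E_x algebra_simps)
  moreover have "\<dots> = lam * ?E x"
    using edge_eq[OF \<open>adj x x1\<close>] E_x by simp
  ultimately show ?thesis by simp
qed

theorem lemma3p1:
  fixes V :: "'a set" and adj :: "'a \<Rightarrow> 'a \<Rightarrow> bool"
    and p :: "'a \<Rightarrow> 'a \<Rightarrow> real" and f :: "'a \<Rightarrow> 'a \<Rightarrow> complex" and lam :: complex
  assumes "countable V"
    and "tree V adj"
    and "\<forall>x\<in>V. \<not> leaf adj x"
    and "nn_stochastic V adj p"
    and i: "\<forall>x\<in>V. \<forall>y. adj x y \<longrightarrow> f x y * f y x \<noteq> 1"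
    and ii: "\<forall>x\<in>V. ((\<lambda>v. norm (of_real (p x v) * f v x)) summable_on {v. adj x v})
                  \<and> (infsum (\<lambda>v. of_real (p x v) * f v x) {v. adj x v}) \<noteq> lam"
    and iii: "\<forall>x\<in>V. \<forall>y. adj x y \<longrightarrow>
               lam * f x y = of_real (p x y)
                 + ((infsum (\<lambda>v. of_real (p x v) * f v x) {v. adj x v}) - of_real (p x y) * f y x) * f x y"
  shows "\<forall>y\<in>V.
           (\<forall>x\<in>V. x \<noteq> y \<longrightarrow>
              ((\<lambda>w. norm (of_real (p x w) * ext_weight adj f w y)) summable_on {w. adj x w})
              \<and> (infsum (\<lambda>w. of_real (p x w) * ext_weight adj f w y) {w. adj x w}) = lam * ext_weight adj f x y)
           \<and> ((\<lambda>w. norm (of_real (p y w) * ext_weight adj f w y)) summable_on {w. adj y w})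
           \<and> (infsum (\<lambda>w. of_real (p y w) * ext_weight adj f w y) {w. adj y w})
               = (infsum (\<lambda>v. of_real (p y v) * f v y) {v. adj y v})"
proof -
  note tree = \<open>tree V adj\<close>
  have off_target: "((\<lambda>w. norm (of_real (p x w) * ext_weight adj f w y)) summable_on {w. adj x w})
      \<and> infsum (\<lambda>w. of_real (p x w) * ext_weight adj f w y) {w. adj x w} = lam * ext_weight adj f x y"
    if "x \<in> V" "y \<in> V" "x \<noteq> y" for x y
    using ext_weight_eigenfunction_off_target[OF tree that] ii iii \<open>x \<in> V\<close> by blast
  have at_target: "((\<lambda>w. norm (of_real (p y w) * ext_weight adj f w y)) summable_on {w. adj y w})
      \<and> infsum (\<lambda>w. of_real (p y w) * ext_weight adj f w y) {w. adj y w}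
        = infsum (\<lambda>v. of_real (p y v) * f v y) {v. adj y v}"
    if "y \<in> V" for y
  proof -
    have "of_real (p y w) * ext_weight adj f w y = of_real (p y w) * f w y" if "w \<in> {w. adj y w}" for w
      using that ext_weight_edge[OF tree] tree_adj_sym[OF tree] by simp
    then show ?thesis
      using ii \<open>y \<in> V\<close> summable_on_cong infsum_cong by (metis (no_types, lifting))
  qed
  show ?thesis using off_target at_target by blast
qed

end
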